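(* Let $I=(i_1,\dots,i_k)$ be positive integers with sum $n$, and let $U,V\in S_n^I$ with $U\preceq V$ and $U\ne V$. Let $j_0$ be the least index with $U(j_0)\neq V(j_0)$. Then $U(j_0)<V(j_0)$. Let $l\ge j_0$ be maximal such that $V(j_0)=V(j_0+1)=\dots=V(l)$, and let $m$ be the least integer with $l\le m\le n$ satisfying $U(j_0)\le V(m)<V(l)$. Let $V'=V\circ(l,m)$, i.e. the string $(V(1),\dots,V(n))$ with the entries in positions $l$ and $m$ swapped. Then $U\preceq V'\preceq V$.
   Context: $S_n^I$ is the set of surjective maps $\tau\colon\{1,\dots,n\}\to\{1,\dots,k\}$ with $|\tau^{-1}(j)|=i_j$ for all $j$, written as strings $(\tau(1),\dots,\tau(n))$. Put $r_\tau[p,q]=\#\{j\le p:\ \tau(j)\ge q\}$; the Bruhat order on $S_n^I$ is $\tau\preceq\upsilon$ iff $r_\tau[p,q]\le r_\upsilon[p,q]$ for all $1\le p\le n$, $1\le q\le k$. *)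

theory Defs
  imports Main "HOL-Combinatorics.Transposition"
begin

(* The composition I = (i_1,...,i_k) is a list; i_j = I ! (j-1), k = length I, n = sum_list I.
   Maps tau : {1..n} -> {1..k} are represented as functions nat => nat that are 0 outside {1..n}
   (canonical representatives, so that equality of functions is equality of strings). *)

definition SnI :: "nat list \<Rightarrow> (nat \<Rightarrow> nat) set" where
  "SnI I = {\<tau>. (\<forall>p. p \<notin> {1..sum_list I} \<longrightarrow> \<tau> p = 0)
              \<and> \<tau> ` {1..sum_list I} = {1..length I}
              \<and> (\<forall>j\<in>{1..length I}. card {p\<in>{1..sum_list I}. \<tau> p = j} = I ! (j - 1))}"

definition rk :: "(nat \<Rightarrow> nat) \<Rightarrow> nat \<Rightarrow> nat \<Rightarrow> nat" where
  "rk \<tau> p q = card {j\<in>{1..p}. \<tau> j \<ge> q}"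

definition bruhat_le :: "nat list \<Rightarrow> (nat \<Rightarrow> nat) \<Rightarrow> (nat \<Rightarrow> nat) \<Rightarrow> bool" where
  "bruhat_le I \<tau> \<upsilon> \<longleftrightarrow>
     (\<forall>p\<in>{1..sum_list I}. \<forall>q\<in>{1..length I}. rk \<tau> p q \<le> rk \<upsilon> p q)"

end

theory Submission
  imports Defs
begin

text \<open>
  Write \<open>a = U j\<^sub>0\<close> and \<open>b = V j\<^sub>0\<close>. The number of positions \<open>j \<le> p\<close> with value in a
  window \<open>[a, q)\<close> is \<open>rk \<tau> p a - rk \<tau> p q\<close>. Since \<open>U\<close> and \<open>V\<close> agree before \<open>j\<^sub>0\<close>, as long as
  \<open>V\<close> has no entry in \<open>[a, q)\<close> at positions \<open>j\<^sub>0..p\<close> the window count of \<open>U\<close> exceeds that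
  of \<open>V\<close>; together with \<open>rk U p a \<le> rk V p a\<close> this forces \<open>rk U p q < rk V p q\<close>.
  This gives \<open>a < b\<close> (take \<open>q = \<infinity>\<close> and \<open>p = j\<^sub>0\<close>), the existence of \<open>m\<close> (take \<open>p = n\<close>, \<open>q = b\<close>,
  where both ranks are fixed by \<open>I\<close>) and a strict inequality for \<open>l \<le> p < m\<close>,
  \<open>V m < q \<le> b\<close>, which is exactly the slack consumed by the transposition:
  swapping the descent \<open>V l > V m\<close> lowers \<open>rk V p q\<close> by one precisely in that range.
\<close>

lemma card_split_two:
  assumes "finite A" "x \<noteq> y"
  shows "card A = card (A - {x, y}) + (if x \<in> A then 1 else 0) + (if y \<in> A then 1 else 0)"
proof -
  have "card (A - {x, y}) = card A - card (A \<inter> {x, y})"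
    using assms by (simp add: card_Diff_subset_Int)
  moreover have "card (A \<inter> {x, y}) = (if x \<in> A then 1 else 0) + (if y \<in> A then 1 else 0)"
    using assms by (cases "x \<in> A"; cases "y \<in> A") (auto simp: Int_insert_right)
  moreover have "card (A \<inter> {x, y}) \<le> card A"
    using assms by (simp add: card_mono)
  ultimately show ?thesis by linarith
qed

lemma SnI_range:
  assumes "\<tau> \<in> SnI I" "j \<in> {1..sum_list I}"
  shows "\<tau> j \<in> {1..length I}"
proof -
  have "\<tau> ` {1..sum_list I} = {1..length I}"
    using assms(1) unfolding SnI_def by blast
  then show ?thesis using assms(2) by blast
qed

lemma SnI_first_difference:
  assumes "U \<in> SnI I" "V \<in> SnI I" "U \<noteq> V"
  defines "j0 \<equiv> LEAST j. 1 \<le> j \<and> j \<le> sum_list I \<and> U j \<noteq> V j"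
  shows "j0 \<in> {1..sum_list I}" "U j0 \<noteq> V j0" "\<forall>j. 1 \<le> j \<longrightarrow> j < j0 \<longrightarrow> U j = V j"
proof -
  obtain x where "U x \<noteq> V x"
    using assms(3) by blast
  moreover have "U x = V x" if "x \<notin> {1..sum_list I}"
    using assms(1,2) that unfolding SnI_def by simp
  ultimately have "\<exists>j. 1 \<le> j \<and> j \<le> sum_list I \<and> U j \<noteq> V j"
    by auto
  then have j0: "1 \<le> j0 \<and> j0 \<le> sum_list I \<and> U j0 \<noteq> V j0"
    unfolding j0_def by (rule LeastI_ex)
  then show "j0 \<in> {1..sum_list I}" "U j0 \<noteq> V j0"
    by auto
  show "\<forall>j. 1 \<le> j \<longrightarrow> j < j0 \<longrightarrow> U j = V j"
    using not_less_Least j0 unfolding j0_def by fastforce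
qed

lemma Greatest_plateau:
  fixes f :: "nat \<Rightarrow> 'a"
  assumes "j \<le> n"
  defines "l \<equiv> GREATEST l. j \<le> l \<and> l \<le> n \<and> (\<forall>t\<in>{j..l}. f t = f j)"
  shows "j \<le> l" "l \<le> n" "\<forall>t\<in>{j..l}. f t = f j"
proof -
  let ?P = "\<lambda>l. j \<le> l \<and> l \<le> n \<and> (\<forall>t\<in>{j..l}. f t = f j)"
  have "?P j"
    using assms(1) by simp
  then have "?P l"
    unfolding l_def by (rule GreatestI_nat[of _ j n]) blast
  then show "j \<le> l" "l \<le> n" "\<forall>t\<in>{j..l}. f t = f j"
    by blast+
qed

lemma rk_antimono:
  assumes "a \<le> q"
  shows "rk \<tau> p q \<le> rk \<tau> p a"
  unfolding rk_def using assms by (intro card_mono) auto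

lemma rk_diff_eq_card_window:
  assumes "a \<le> q"
  shows "rk \<tau> p a - rk \<tau> p q = card {j\<in>{1..p}. a \<le> \<tau> j \<and> \<tau> j < q}"
proof -
  have "{j\<in>{1..p}. a \<le> \<tau> j \<and> \<tau> j < q} = {j\<in>{1..p}. a \<le> \<tau> j} - {j\<in>{1..p}. q \<le> \<tau> j}"
    by auto
  moreover have "{j\<in>{1..p}. q \<le> \<tau> j} \<subseteq> {j\<in>{1..p}. a \<le> \<tau> j}"
    using assms by auto
  ultimately show ?thesis
    unfolding rk_def by (simp add: card_Diff_subset)
qed

lemma rk_SnI_total:
  assumes "\<tau> \<in> SnI I" "1 \<le> q"
  shows "rk \<tau> (sum_list I) q = (\<Sum>v\<in>{q..length I}. I ! (v - 1))"
proof -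
  let ?n = "sum_list I" and ?k = "length I"
  have img: "\<tau> ` {1..?n} = {1..?k}"
    and cnt: "\<forall>j\<in>{1..?k}. card {p\<in>{1..?n}. \<tau> p = j} = I ! (j - 1)"
    using assms(1) unfolding SnI_def by auto
  have "{j\<in>{1..?n}. q \<le> \<tau> j} = (\<Union>v\<in>{q..?k}. {p\<in>{1..?n}. \<tau> p = v})"
    using img by auto
  then have "rk \<tau> ?n q = card (\<Union>v\<in>{q..?k}. {p\<in>{1..?n}. \<tau> p = v})"
    unfolding rk_def by simp
  also have "\<dots> = (\<Sum>v\<in>{q..?k}. card {p\<in>{1..?n}. \<tau> p = v})"
    by (rule card_UN_disjoint) auto
  also have "\<dots> = (\<Sum>v\<in>{q..?k}. I ! (v - 1))"
    using cnt assms(2) by (intro sum.cong) auto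
  finally show ?thesis .
qed

lemma card_less_if_agree_before:
  fixes j0 p :: nat
  assumes agree: "\<forall>j. 1 \<le> j \<longrightarrow> j < j0 \<longrightarrow> \<tau> j = \<upsilon> j"
    and "1 \<le> j0" "j0 \<le> p" "P (\<tau> j0)"
    and none: "\<forall>j\<in>{j0..p}. \<not> P (\<upsilon> j)"
  shows "card {j\<in>{1..p}. P (\<upsilon> j)} < card {j\<in>{1..p}. P (\<tau> j)}"
proof -
  define D where "D = {j\<in>{1..<j0}. P (\<tau> j)}"
  have "{j\<in>{1..p}. P (\<upsilon> j)} \<subseteq> D"
  proof
    fix j assume j: "j \<in> {j\<in>{1..p}. P (\<upsilon> j)}"
    then have "j < j0" using none by (auto simp: not_less)
    with j agree show "j \<in> D" unfolding D_def by auto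
  qed
  then have "card {j\<in>{1..p}. P (\<upsilon> j)} \<le> card D"
    by (intro card_mono) (simp_all add: D_def)
  also have "\<dots> < card (insert j0 D)"
    by (simp add: D_def)
  also have "\<dots> \<le> card {j\<in>{1..p}. P (\<tau> j)}"
    using assms(2-4) by (intro card_mono) (auto simp: D_def)
  finally show ?thesis .
qed

lemma rk_less_if_no_window:
  assumes U: "U \<in> SnI I" and le: "bruhat_le I U V"
    and agree: "\<forall>j. 1 \<le> j \<longrightarrow> j < j0 \<longrightarrow> U j = V j"
    and "1 \<le> j0" "j0 \<le> p" "p \<le> sum_list I" "U j0 < q"
    and none: "\<forall>j\<in>{j0..p}. \<not> (U j0 \<le> V j \<and> V j < q)"
  shows "rk U p q < rk V p q"
proof -
  let ?a = "U j0"
  have "?a \<in> {1..length I}"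
    using U assms(4-6) by (intro SnI_range) auto
  then have "rk U p ?a \<le> rk V p ?a"
    using le assms(4-6) unfolding bruhat_le_def by auto
  moreover have "card {j\<in>{1..p}. ?a \<le> V j \<and> V j < q} < card {j\<in>{1..p}. ?a \<le> U j \<and> U j < q}"
    using assms(4-7) agree none by (intro card_less_if_agree_before) auto
  then have "rk V p ?a - rk V p q < rk U p ?a - rk U p q"
    using \<open>?a < q\<close> by (simp add: rk_diff_eq_card_window)
  moreover have "rk V p q \<le> rk V p ?a" "rk U p q \<le> rk U p ?a"
    using \<open>?a < q\<close> by (simp_all add: rk_antimono)
  ultimately show ?thesis by linarith
qed

lemma bruhat_le_first_difference_less:
  assumes U: "U \<in> SnI I" and le: "bruhat_le I U V"
    and agree: "\<forall>j. 1 \<le> j \<longrightarrow> j < j0 \<longrightarrow> U j = V j"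
    and j0: "j0 \<in> {1..sum_list I}" and ne: "U j0 \<noteq> V j0"
  shows "U j0 < V j0"
proof (rule ccontr)
  assume "\<not> U j0 < V j0"
  with ne have "V j0 < U j0" by simp
  have "U j0 \<in> {1..length I}"
    using U j0 by (rule SnI_range)
  then have "rk U j0 (U j0) \<le> rk V j0 (U j0)"
    using le j0 unfolding bruhat_le_def by auto
  moreover have "rk V j0 (U j0) < rk U j0 (U j0)"
    unfolding rk_def using j0 agree \<open>V j0 < U j0\<close>
    by (intro card_less_if_agree_before) auto
  ultimately show False by simp
qed

lemma SnI_window_nonempty:
  assumes U: "U \<in> SnI I" and V: "V \<in> SnI I" and le: "bruhat_le I U V"
    and agree: "\<forall>j. 1 \<le> j \<longrightarrow> j < j0 \<longrightarrow> U j = V j"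
    and j0: "j0 \<in> {1..sum_list I}" and less: "U j0 < V j0"
  shows "\<exists>t\<in>{j0..sum_list I}. U j0 \<le> V t \<and> V t < V j0"
proof (rule ccontr)
  assume "\<not> ?thesis"
  then have "rk U (sum_list I) (V j0) < rk V (sum_list I) (V j0)"
    using j0 less by (intro rk_less_if_no_window[OF U le agree]) auto
  moreover have "rk U (sum_list I) (V j0) = rk V (sum_list I) (V j0)"
    using rk_SnI_total[OF U] rk_SnI_total[OF V] less by simp
  ultimately show False by simp
qed

lemma rk_less_across_plateau:
  assumes U: "U \<in> SnI I" and le: "bruhat_le I U V"
    and agree: "\<forall>j. 1 \<le> j \<longrightarrow> j < j0 \<longrightarrow> U j = V j"
    and "1 \<le> j0" "j0 \<le> l" "l \<le> p" "p \<le> sum_list I" "U j0 < q" "q \<le> V j0"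
    and plateau: "\<forall>t\<in>{j0..l}. V t = V j0"
    and gap: "\<forall>t\<in>{l<..p}. \<not> (U j0 \<le> V t \<and> V t < V j0)"
  shows "rk U p q < rk V p q"
proof (rule rk_less_if_no_window[OF U le agree])
  show "\<forall>t\<in>{j0..p}. \<not> (U j0 \<le> V t \<and> V t < q)"
  proof
    fix t assume "t \<in> {j0..p}"
    then consider "t \<in> {j0..l}" | "t \<in> {l<..p}"
      by (cases "t \<le> l") auto
    then show "\<not> (U j0 \<le> V t \<and> V t < q)"
    proof cases
      case 1
      then have "V t = V j0"
        using plateau by blast
      then show ?thesis
        using \<open>q \<le> V j0\<close> by simp
    next
      case 2
      then show ?thesis
        using gap \<open>q \<le> V j0\<close> by auto
    qed
  qed
qed (use assms(4-8) in auto)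

lemma rk_comp_transpose:
  assumes "1 \<le> l" "l < m"
  shows "rk (\<tau> \<circ> transpose l m) p q + (if l \<le> p \<and> p < m \<and> q \<le> \<tau> l then 1 else 0)
       = rk \<tau> p q + (if l \<le> p \<and> p < m \<and> q \<le> \<tau> m then 1 else 0)"
proof -
  let ?W = "\<tau> \<circ> transpose l m"
  have rest: "{j\<in>{1..p}. q \<le> ?W j} - {l, m} = {j\<in>{1..p}. q \<le> \<tau> j} - {l, m}"
    by (auto simp: transpose_def)
  have "rk ?W p q = card ({j\<in>{1..p}. q \<le> \<tau> j} - {l, m})
      + (if l \<le> p \<and> q \<le> \<tau> m then 1 else 0) + (if m \<le> p \<and> q \<le> \<tau> l then 1 else 0)"
    unfolding rk_def using assms rest by (subst card_split_two[where x = l and y = m]) auto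
  moreover have "rk \<tau> p q = card ({j\<in>{1..p}. q \<le> \<tau> j} - {l, m})
      + (if l \<le> p \<and> q \<le> \<tau> l then 1 else 0) + (if m \<le> p \<and> q \<le> \<tau> m then 1 else 0)"
    unfolding rk_def using assms by (subst card_split_two[where x = l and y = m]) auto
  ultimately show ?thesis
    using assms by auto
qed

lemma bruhat_le_comp_transpose_descent:
  assumes "1 \<le> l" "l < m" "\<tau> m < \<tau> l"
  shows "bruhat_le I (\<tau> \<circ> transpose l m) \<tau>"
  unfolding bruhat_le_def
proof (intro ballI)
  fix p q
  show "rk (\<tau> \<circ> transpose l m) p q \<le> rk \<tau> p q"
    using rk_comp_transpose[OF assms(1,2), of \<tau> p q] assms(3) by (auto split: if_splits)
qed

lemma bruhat_le_comp_transpose_if_slack: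
  assumes "1 \<le> l" "l < m" "\<tau> m < \<tau> l" and le: "bruhat_le I \<sigma> \<tau>"
    and slack: "\<And>p q. l \<le> p \<Longrightarrow> p < m \<Longrightarrow> \<tau> m < q \<Longrightarrow> q \<le> \<tau> l \<Longrightarrow> p \<le> sum_list I
                  \<Longrightarrow> rk \<sigma> p q < rk \<tau> p q"
  shows "bruhat_le I \<sigma> (\<tau> \<circ> transpose l m)"
  unfolding bruhat_le_def
proof (intro ballI)
  fix p q assume p: "p \<in> {1..sum_list I}" and q: "q \<in> {1..length I}"
  have "rk \<sigma> p q \<le> rk \<tau> p q"
    using le p q unfolding bruhat_le_def by blast
  moreover have "rk \<sigma> p q < rk \<tau> p q" if "l \<le> p" "p < m" "\<tau> m < q" "q \<le> \<tau> l"
    using slack that p by simp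
  ultimately show "rk \<sigma> p q \<le> rk (\<tau> \<circ> transpose l m) p q"
    using rk_comp_transpose[OF assms(1,2), of \<tau> p q] assms(3) by (auto split: if_splits)
qed

theorem lemma2p11:
  fixes I :: "nat list" and U V :: "nat \<Rightarrow> nat"
  assumes pos: "\<forall>i\<in>set I. i > 0"
    and U: "U \<in> SnI I" and V: "V \<in> SnI I"
    and le: "bruhat_le I U V" and ne: "U \<noteq> V"
  defines "n \<equiv> sum_list I"
  defines "j0 \<equiv> LEAST j. 1 \<le> j \<and> j \<le> n \<and> U j \<noteq> V j"
  defines "l \<equiv> GREATEST l. j0 \<le> l \<and> l \<le> n \<and> (\<forall>t\<in>{j0..l}. V t = V j0)"
  defines "m \<equiv> LEAST m. l \<le> m \<and> m \<le> n \<and> U j0 \<le> V m \<and> V m < V l"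
  shows "U j0 < V j0
         \<and> (\<exists>m'. l \<le> m' \<and> m' \<le> n \<and> U j0 \<le> V m' \<and> V m' < V l)
         \<and> bruhat_le I U (V \<circ> Transposition.transpose l m)
         \<and> bruhat_le I (V \<circ> Transposition.transpose l m) V"
proof -
  note j0 = SnI_first_difference[OF U V ne, folded n_def, folded j0_def]
  have less: "U j0 < V j0"
    using bruhat_le_first_difference_less[OF U le j0(3)] j0(1,2) unfolding n_def by blast
  have "j0 \<le> n"
    using j0(1) by simp
  note l = Greatest_plateau[OF this, of V, folded l_def]
  note plateau = l(3)
  have Vl: "V l = V j0"
    by (rule plateau[rule_format]) (use l(1) in auto)
  obtain t where t: "t \<in> {j0..n}" "U j0 \<le> V t" "V t < V j0"
    using SnI_window_nonempty[OF U V le j0(3)] j0(1) less unfolding n_def by blast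
  have "l < t"
    using plateau[rule_format, of t] t by (cases "t \<le> l") auto
  then have window: "\<exists>m'. l \<le> m' \<and> m' \<le> n \<and> U j0 \<le> V m' \<and> V m' < V l"
    using t Vl by (intro exI[of _ t]) auto
  then have m: "l \<le> m \<and> m \<le> n \<and> U j0 \<le> V m \<and> V m < V l"
    unfolding m_def by (rule LeastI_ex)
  have gap: "\<forall>t\<in>{l<..p}. \<not> (U j0 \<le> V t \<and> V t < V j0)" if "p < m" for p
  proof
    fix t assume "t \<in> {l<..p}"
    then have "t < m" "l \<le> t" "t \<le> n"
      using that m by auto
    then show "\<not> (U j0 \<le> V t \<and> V t < V j0)"
      using not_less_Least[of t "\<lambda>m. l \<le> m \<and> m \<le> n \<and> U j0 \<le> V m \<and> V m < V l"] Vl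
      unfolding m_def by auto
  qed
  have lm: "1 \<le> l" "l < m"
    using m j0(1) l(1) by (auto simp: le_less)
  have "bruhat_le I U (V \<circ> transpose l m)"
    using lm m Vl l(1,2) j0(1) gap unfolding n_def
    by (intro bruhat_le_comp_transpose_if_slack[OF _ _ _ le]
        rk_less_across_plateau[OF U le j0(3) _ _ _ _ _ _ plateau]) auto
  moreover have "bruhat_le I (V \<circ> transpose l m) V"
    using lm m by (intro bruhat_le_comp_transpose_descent) auto
  ultimately show ?thesis
    using less window by blast
qed

end
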